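(* For every integer $n\geq 1$, \[ (n+1)^{n-1}=\sum_{T}\frac{n!}{2^n}\prod_{v\in T}\left(1+\frac{1}{h(v)}\right), \] where the sum ranges over all (unlabeled) binary trees $T$ with $n$ vertices.
   Context: A binary tree is a rooted tree in which each vertex has a left subtree and a right subtree, each possibly empty; binary trees differing in whether a child is a left or a right child are distinct. For a vertex $v$ of a binary tree $T$, the hook length $h(v)$ is the number of descendants of $v$ in $T$, including $v$ itself. *)

theory Defs
  imports Complex_Main "HOL-Library.Tree"
begin

text \<open>Unlabeled binary trees are modelled as values of type unit tree
 (Leaf is the empty tree; Node l () r has left subtree l and right subtree r). The hook length of the root of a subtree
 Node l () r is the number of its vertices, i.e. its size.\<close>

definition binary_trees :: "nat \<Rightarrow> unit tree set" where
  "binary_trees n = {t. size t = n}"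

fun hook_prod :: "unit tree \<Rightarrow> real" where
  "hook_prod Leaf = 1"
| "hook_prod (Node l x r) =
     (1 + 1 / real (size (Node l x r))) * hook_prod l * hook_prod r"

end

theory Submission
  imports Defs
begin

text \<open>Removing the root of a binary tree with n + 1 vertices leaves an ordered pair of
  subtrees with i and n - i vertices, and the root contributes the factor 1 + 1/(n + 1).
  So the sums S(n) of the hook products over all trees with n vertices satisfy
  S(n + 1) = (n + 2)/(n + 1) * (sum over i of S(i) * S(n - i)).
  In terms of the Abel polynomials A(n, x) = x * (x + n)^(n - 1), the ansatz
  S(n) = 2^n * A(n, 1) / n! solves this recurrence because of Abel's convolution identity
  (sum over k of (n choose k) * A(k, x) * A(n - k, y)) = A(n, x + y), which in turn
  follows from Abel's generalisation of the binomial theorem.\<close>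

lemma sum_choose_Suc_split:
  fixes g :: "nat \<Rightarrow> 'a::comm_semiring_1"
  shows "(\<Sum>k\<le>Suc n. of_nat (Suc n choose k) * g k) =
         (\<Sum>k\<le>n. of_nat (n choose k) * g k) + (\<Sum>k\<le>n. of_nat (n choose k) * g (Suc k))"
proof -
  have "(\<Sum>k\<le>Suc n. of_nat (Suc n choose k) * g k)
      = g 0 + (\<Sum>k\<le>n. of_nat (n choose Suc k) * g (Suc k))
          + (\<Sum>k\<le>n. of_nat (n choose k) * g (Suc k))"
    by (simp only: sum.atMost_Suc_shift binomial_Suc_Suc of_nat_add distrib_right sum.distrib
        add.assoc) (simp add: add_ac)
  also have "g 0 + (\<Sum>k\<le>n. of_nat (n choose Suc k) * g (Suc k)) = (\<Sum>k\<le>n. of_nat (n choose k) * g k)"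
    using sum.atMost_Suc_shift[of "\<lambda>k. of_nat (n choose k) * g k" n] by (simp add: binomial_eq_0)
  finally show ?thesis .
qed

lemma sum_choose_absorb_comp:
  fixes f :: "nat \<Rightarrow> 'a::comm_semiring_1"
  shows "(\<Sum>k\<le>Suc n. of_nat (Suc n choose k) * of_nat (Suc n - k) * f k) =
         of_nat (Suc n) * (\<Sum>k\<le>n. of_nat (n choose k) * f k)"
proof -
  have "of_nat (Suc n choose k) * of_nat (Suc n - k) * f k
      = of_nat (Suc n) * (of_nat (n choose k) * f k)" for k
    using binomial_absorb_comp[of "Suc n" k]
    by (metis diff_Suc_1 mult.assoc mult.commute of_nat_mult)
  then show ?thesis
    by (simp add: sum_distrib_left binomial_eq_0)
qed

lemma alternating_sum_choose_power_eq_0: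
  fixes x :: "'a::comm_ring_1"
  assumes "j < n"
  shows "(\<Sum>k\<le>n. of_nat (n choose k) * (-1) ^ k * (x + of_nat k) ^ j) = 0"
  using assms
proof (induction n arbitrary: j x)
  case 0
  then show ?case by simp
next
  case (Suc n)
  \<comment> \<open>Pascal's rule turns the sum for n + 1 into a first difference of sums for n,
    and taking the difference lowers the degree j.\<close>
  define D where "D (y::'a) i = (\<Sum>k\<le>n. of_nat (n choose k) * (-1) ^ k * (y + of_nat k) ^ i)" for y i
  have binomial_shift: "(y + 1) ^ j - y ^ j = (\<Sum>i<j. of_nat (j choose i) * y ^ i)" for y :: 'a
    using binomial_ring[of y 1 j] by (simp add: lessThan_Suc_atMost[symmetric])
  have "(\<Sum>k\<le>Suc n. of_nat (Suc n choose k) * (-1) ^ k * (x + of_nat k) ^ j) = D x j - D (x + 1) j"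
    unfolding D_def mult.assoc sum_choose_Suc_split by (simp add: sum_negf algebra_simps)
  also have "\<dots> = - (\<Sum>k\<le>n. of_nat (n choose k) * (-1) ^ k *
      ((x + of_nat k + 1) ^ j - (x + of_nat k) ^ j))"
    unfolding D_def by (simp add: sum_subtractf[symmetric] sum_negf[symmetric] algebra_simps)
  also have "\<dots> = - (\<Sum>i<j. of_nat (j choose i) * D x i)"
    unfolding binomial_shift D_def
    by (simp add: sum_distrib_left sum_distrib_right mult_ac sum.swap[of _ "{..n}"])
  also have "\<dots> = 0"
    using Suc.IH Suc.prems unfolding D_def by simp
  finally show ?case .
qed

definition abel_poly :: "nat \<Rightarrow> real \<Rightarrow> real" where
  "abel_poly n x = (if n = 0 then 1 else x * (x + real n) ^ (n - 1))"

lemma abel_poly_0 [simp]: "abel_poly 0 x = 1"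
  by (simp add: abel_poly_def)

lemma abel_poly_eq_diff: "abel_poly n x = (x + real n) ^ n - real n * (x + real n) ^ (n - 1)"
  by (cases n) (simp_all add: abel_poly_def algebra_simps)

lemma abel_poly_mult_power:
  assumes "0 < n" "k \<le> n"
  shows "abel_poly k x * (x + real k) ^ (n - k) = x * (x + real k) ^ (n - 1)"
proof (cases k)
  case 0
  with assms show ?thesis by (simp add: power_eq_if)
next
  case (Suc i)
  with assms show ?thesis by (simp add: abel_poly_def power_add[symmetric])
qed

lemma abel_poly_Suc_1_eq: "2 * abel_poly (Suc n) 1 = (real n + 2) * abel_poly n 2"
  by (cases n) (simp_all add: abel_poly_def algebra_simps)

lemma abel_sum_has_real_derivative:
  "((\<lambda>z. \<Sum>k\<le>Suc m. real (Suc m choose k) * abel_poly k x * (z - real k) ^ (Suc m - k))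
     has_real_derivative
     real (Suc m) * (\<Sum>k\<le>m. real (m choose k) * abel_poly k x * (z - real k) ^ (m - k))) (at z)"
proof -
  have "((\<lambda>z. \<Sum>k\<le>Suc m. real (Suc m choose k) * abel_poly k x * (z - real k) ^ (Suc m - k))
     has_real_derivative
     (\<Sum>k\<le>Suc m. real (Suc m choose k) * real (Suc m - k) *
        (abel_poly k x * (z - real k) ^ (m - k)))) (at z)"
    by (auto intro!: derivative_eq_intros sum.cong simp: mult_ac)
  then show ?thesis
    by (simp only: sum_choose_absorb_comp) (simp add: mult.assoc)
qed

lemma abel_sum_at_neg_eq_0:
  "(\<Sum>k\<le>Suc m. real (Suc m choose k) * abel_poly k x * (- x - real k) ^ (Suc m - k)) = 0"
proof -
  have "real (Suc m choose k) * abel_poly k x * (- x - real k) ^ (Suc m - k)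
      = (-1) ^ Suc m * x * (real (Suc m choose k) * (-1) ^ k * (x + real k) ^ m)"
    if "k \<le> Suc m" for k
  proof -
    have "(- x - real k) ^ (Suc m - k) = (-1) ^ (Suc m - k) * (x + real k) ^ (Suc m - k)"
      by (simp add: power_minus[symmetric])
    moreover have "(-1::real) ^ (Suc m - k) = (-1) ^ Suc m * (-1) ^ k"
      using that by (metis neg_one_power_add_eq_neg_one_power_diff power_add)
    ultimately show ?thesis
      using abel_poly_mult_power[of "Suc m" k x] that by (simp add: mult_ac)
  qed
  then have "(\<Sum>k\<le>Suc m. real (Suc m choose k) * abel_poly k x * (- x - real k) ^ (Suc m - k))
      = (-1) ^ Suc m * x * (\<Sum>k\<le>Suc m. real (Suc m choose k) * (-1) ^ k * (x + real k) ^ m)"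
    by (simp add: sum_distrib_left del: sum.atMost_Suc)
  also have "\<dots> = 0"
    by (simp add: alternating_sum_choose_power_eq_0 del: sum.atMost_Suc)
  finally show ?thesis .
qed

theorem abel_binomial:
  "(\<Sum>k\<le>n. real (n choose k) * abel_poly k x * (z - real k) ^ (n - k)) = (x + z) ^ n"
proof (induction n arbitrary: z)
  case 0
  show ?case by simp
next
  case (Suc m)
  \<comment> \<open>Both sides have the same derivative in z by induction, and both vanish at z = - x.\<close>
  define g where "g = (\<lambda>z. (\<Sum>k\<le>Suc m. real (Suc m choose k) * abel_poly k x *
    (z - real k) ^ (Suc m - k)) - (x + z) ^ Suc m)"
  have "((\<lambda>z. (x + z) ^ Suc m) has_real_derivative real (Suc m) * (x + z) ^ m) (at z)" for z
    by (rule derivative_eq_intros refl | simp)+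
  then have "(g has_real_derivative real (Suc m) * (x + z) ^ m - real (Suc m) * (x + z) ^ m) (at z)"
    for z
    unfolding g_def using DERIV_diff[OF abel_sum_has_real_derivative[of m x z]]
    by (simp only: Suc.IH)
  then have "(g has_real_derivative 0) (at z)" for z
    by simp
  then have "g z = g (- x)"
    by (blast intro: DERIV_isconst_all)
  also have "\<dots> = 0"
    by (simp add: g_def abel_sum_at_neg_eq_0 del: sum.atMost_Suc)
  finally show ?case
    by (simp add: g_def)
qed

theorem abel_convolution:
  "(\<Sum>k\<le>n. real (n choose k) * abel_poly k x * abel_poly (n - k) y) = abel_poly n (x + y)"
proof (cases n)
  case 0
  then show ?thesis by simp
next
  case (Suc m)
  \<comment> \<open>Splitting abel_poly (n - k) y into two powers of y + n - k turns both halves into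
    instances of Abel's binomial theorem with z = y + n.\<close>
  have leading: "(\<Sum>k\<le>n. real (n choose k) * abel_poly k x * (y + real (n - k)) ^ (n - k))
      = (x + y + real n) ^ n" (is "?L = _")
  proof -
    have "?L = (\<Sum>k\<le>n. real (n choose k) * abel_poly k x * ((y + real n) - real k) ^ (n - k))"
      by (intro sum.cong) (auto simp: algebra_simps)
    then show ?thesis
      unfolding abel_binomial by (simp add: add.assoc)
  qed
  have lower: "(\<Sum>k\<le>n. real (n choose k) * abel_poly k x *
      (real (n - k) * (y + real (n - k)) ^ (n - k - 1))) = real n * (x + y + real n) ^ m"
    (is "?L = _")
  proof -
    have "?L = (\<Sum>k\<le>Suc m. real (Suc m choose k) * real (Suc m - k) *
        (abel_poly k x * ((y + real n) - real k) ^ (m - k)))"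
      using Suc by (intro sum.cong) (auto simp: algebra_simps)
    then show ?thesis
      unfolding sum_choose_absorb_comp
      by (simp only: mult.assoc[symmetric] abel_binomial Suc) (simp add: add.assoc)
  qed
  have "(\<Sum>k\<le>n. real (n choose k) * abel_poly k x * abel_poly (n - k) y)
      = (\<Sum>k\<le>n. real (n choose k) * abel_poly k x * (y + real (n - k)) ^ (n - k))
      - (\<Sum>k\<le>n. real (n choose k) * abel_poly k x *
          (real (n - k) * (y + real (n - k)) ^ (n - k - 1)))"
    by (simp add: abel_poly_eq_diff[of "n - _" y] sum_subtractf[symmetric] algebra_simps)
  also have "\<dots> = (x + y + real n) ^ n - real n * (x + y + real n) ^ m"
    by (simp only: leading lower)
  also have "\<dots> = abel_poly n (x + y)"
    using Suc by (simp add: abel_poly_def algebra_simps)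
  finally show ?thesis .
qed

lemma binary_trees_0: "binary_trees 0 = {Leaf}"
  by (auto simp: binary_trees_def)

lemma binary_trees_Suc:
  "binary_trees (Suc n) =
    (\<lambda>(l, r). Node l () r) ` (\<Union>i\<le>n. binary_trees i \<times> binary_trees (n - i))"
proof (intro equalityI subsetI)
  fix t
  assume "t \<in> binary_trees (Suc n)"
  then obtain l r where "t = Node l () r" "size l \<le> n" "size r = n - size l"
    by (cases t) (auto simp: binary_trees_def)
  then show "t \<in> (\<lambda>(l, r). Node l () r) ` (\<Union>i\<le>n. binary_trees i \<times> binary_trees (n - i))"
    by (auto simp: binary_trees_def image_iff)
qed (auto simp: binary_trees_def)

lemma finite_binary_trees: "finite (binary_trees n)"
proof (induction n rule: less_induct)
  case (less n)
  then show ?case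
    by (cases n) (auto simp: binary_trees_0 binary_trees_Suc)
qed

lemma sum_binary_trees_Suc:
  "(\<Sum>t\<in>binary_trees (Suc n). f t) =
   (\<Sum>i\<le>n. \<Sum>l\<in>binary_trees i. \<Sum>r\<in>binary_trees (n - i). f (Node l () r))"
proof -
  have "inj_on (\<lambda>(l, r). Node l () r) (\<Union>i\<le>n. binary_trees i \<times> binary_trees (n - i))"
    by (auto simp: inj_on_def)
  then have "(\<Sum>t\<in>binary_trees (Suc n). f t)
      = (\<Sum>(l, r)\<in>(\<Union>i\<le>n. binary_trees i \<times> binary_trees (n - i)). f (Node l () r))"
    by (simp add: binary_trees_Suc sum.reindex case_prod_unfold)
  also have "\<dots> =
      (\<Sum>i\<le>n. \<Sum>(l, r)\<in>binary_trees i \<times> binary_trees (n - i). f (Node l () r))"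
    by (rule sum.UNION_disjoint) (auto simp: finite_binary_trees, auto simp: binary_trees_def)
  finally show ?thesis
    by (simp add: sum.cartesian_product)
qed

definition hook_sum :: "nat \<Rightarrow> real" where
  "hook_sum n = (\<Sum>t\<in>binary_trees n. hook_prod t)"

lemma hook_sum_Suc:
  "hook_sum (Suc n) = (1 + 1 / real (Suc n)) * (\<Sum>i\<le>n. hook_sum i * hook_sum (n - i))"
proof -
  have "hook_sum (Suc n) = (\<Sum>i\<le>n. \<Sum>l\<in>binary_trees i. \<Sum>r\<in>binary_trees (n - i).
      (1 + 1 / real (Suc n)) * (hook_prod l * hook_prod r))"
    unfolding hook_sum_def sum_binary_trees_Suc
    by (intro sum.cong refl) (auto simp: binary_trees_def)
  moreover have "hook_sum i * hook_sum (n - i) =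
      (\<Sum>l\<in>binary_trees i. \<Sum>r\<in>binary_trees (n - i). hook_prod l * hook_prod r)" for i
    by (simp add: hook_sum_def sum_product)
  ultimately show ?thesis
    by (simp add: sum_distrib_left)
qed

lemma hook_sum_eq: "hook_sum n = 2 ^ n * abel_poly n 1 / fact n"
proof (induction n rule: less_induct)
  case (less n)
  show ?case
  proof (cases n)
    case 0
    then show ?thesis by (simp add: hook_sum_def binary_trees_0)
  next
    case (Suc k)
    have product: "hook_sum i * hook_sum (k - i)
        = 2 ^ k / fact k * (real (k choose i) * abel_poly i 1 * abel_poly (k - i) 1)"
      if "i \<le> k" for i
    proof -
      have "hook_sum i * hook_sum (k - i)
          = 2 ^ i * abel_poly i 1 / fact i * (2 ^ (k - i) * abel_poly (k - i) 1 / fact (k - i))"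
        using less Suc that by simp
      also have "\<dots> = 2 ^ k / fact k *
          (fact k / (fact i * fact (k - i)) * abel_poly i 1 * abel_poly (k - i) 1)"
        using that by (simp add: field_simps flip: power_add)
      finally show ?thesis
        by (simp only: binomial_fact[OF that])
    qed
    have "(\<Sum>i\<le>k. hook_sum i * hook_sum (k - i))
        = 2 ^ k / fact k * (\<Sum>i\<le>k. real (k choose i) * abel_poly i 1 * abel_poly (k - i) 1)"
      unfolding sum_distrib_left by (intro sum.cong refl) (simp add: product)
    also have "\<dots> = 2 ^ k / fact k * abel_poly k 2"
      using abel_convolution[of k 1 1] by simp
    finally have "hook_sum n = (1 + 1 / real (Suc k)) * (2 ^ k / fact k * abel_poly k 2)"
      by (simp add: Suc hook_sum_Suc)
    also have "\<dots> = 2 ^ k / fact n * ((real k + 2) * abel_poly k 2)"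
      using Suc by (simp add: field_simps)
    also have "\<dots> = 2 ^ n * abel_poly n 1 / fact n"
      using Suc by (simp flip: abel_poly_Suc_1_eq)
    finally show ?thesis .
  qed
qed

theorem theorem1:
  fixes n :: nat
  assumes "n \<ge> 1"
  shows "real ((n + 1) ^ (n - 1)) =
    (\<Sum>T\<in>binary_trees n. fact n / 2 ^ n * hook_prod T)"
proof -
  have "(\<Sum>T\<in>binary_trees n. fact n / 2 ^ n * hook_prod T) = fact n / 2 ^ n * hook_sum n"
    by (simp add: hook_sum_def sum_distrib_left)
  also have "\<dots> = abel_poly n 1"
    by (simp add: hook_sum_eq)
  also have "\<dots> = real ((n + 1) ^ (n - 1))"
    using assms by (simp add: abel_poly_def)
  finally show ?thesis by simp
qed

end
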